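(* Suppose that for every complement critical graph $G$ on $n$ vertices one has ${\rm mvr}(G)+{\rm mvr}(\overline{G})\le n+2$. Then for every simple graph $G$ on $n$ vertices, ${\rm mvr}(G)+{\rm mvr}(\overline{G})\le n+2$, and consequently also ${\rm mr}_+(G)+{\rm mr}_+(\overline{G})\le n+2$ and ${\rm mr}(G)+{\rm mr}(\overline{G})\le n+2$ for every simple graph $G$ on $n$ vertices.
   Context: All graphs are finite and simple with nonempty vertex set; $\overline{G}$ denotes the complement of $G$ and $|G|$ its number of vertices. An orthogonal vector representation of a graph $G=(V,E)$ in $\mathbb{R}^d$ is a map $\phi:V\to\mathbb{R}^d$ with $\phi(v)\neq 0$ for all $v$, and for distinct $u,v$: $\langle\phi(u),\phi(v)\rangle=0$ if and only if $uv\notin E$. The minimum vector rank ${\rm mvr}(G)$ is the smallest $d$ for which such a representation exists. For a graph $G$ on vertices $1,\dots,n$, ${\rm mr}(G)$ is the minimum rank of an $n\times n$ Hermitian matrix $M$ with $M_{ij}\neq 0$ (for $i\neq j$) if and only if $ij$ is an edge; ${\rm mr}_+(G)$ is the same minimum taken over positive semidefinite such $M$. A graph $G$ is complement critical if for every proper induced subgraph $H$ of $G$ (with nonempty vertex set), ${\rm mvr}(H)+{\rm mvr}(\overline{H})<{\rm mvr}(G)+{\rm mvr}(\overline{G})$. *)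

theory Defs
  imports "HOL-Analysis.Analysis" "Jordan_Normal_Form.DL_Rank"
begin

definition simple_graph :: "nat set \<Rightarrow> (nat \<Rightarrow> nat \<Rightarrow> bool) \<Rightarrow> bool" where
  "simple_graph V E \<longleftrightarrow> finite V \<and> V \<noteq> {} \<and>
     (\<forall>u v. E u v \<longrightarrow> u \<in> V \<and> v \<in> V \<and> u \<noteq> v \<and> E v u)"

definition compl_graph :: "nat set \<Rightarrow> (nat \<Rightarrow> nat \<Rightarrow> bool) \<Rightarrow> nat \<Rightarrow> nat \<Rightarrow> bool" where
  "compl_graph V E u v \<longleftrightarrow> u \<in> V \<and> v \<in> V \<and> u \<noteq> v \<and> \<not> E u v"

definition induced :: "nat set \<Rightarrow> (nat \<Rightarrow> nat \<Rightarrow> bool) \<Rightarrow> nat \<Rightarrow> nat \<Rightarrow> bool" where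
  "induced S E u v \<longleftrightarrow> u \<in> S \<and> v \<in> S \<and> E u v"

text \<open>Orthogonal vector representation in R^d; vectors are functions nat => real,
only coordinates below d are used.\<close>
definition ortho_rep :: "nat set \<Rightarrow> (nat \<Rightarrow> nat \<Rightarrow> bool) \<Rightarrow> nat \<Rightarrow> (nat \<Rightarrow> nat \<Rightarrow> real) \<Rightarrow> bool" where
  "ortho_rep V E d \<phi> \<longleftrightarrow>
     (\<forall>v\<in>V. \<exists>i<d. \<phi> v i \<noteq> 0) \<and>
     (\<forall>u\<in>V. \<forall>v\<in>V. u \<noteq> v \<longrightarrow> ((\<Sum>i<d. \<phi> u i * \<phi> v i) = 0 \<longleftrightarrow> \<not> E u v))"

definition mvr :: "nat set \<Rightarrow> (nat \<Rightarrow> nat \<Rightarrow> bool) \<Rightarrow> nat" where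
  "mvr V E = (LEAST d. \<exists>\<phi>. ortho_rep V E d \<phi>)"

definition complement_critical :: "nat set \<Rightarrow> (nat \<Rightarrow> nat \<Rightarrow> bool) \<Rightarrow> bool" where
  "complement_critical V E \<longleftrightarrow>
     (\<forall>S. S \<subset> V \<and> S \<noteq> {} \<longrightarrow>
        mvr S (induced S E) + mvr S (compl_graph S (induced S E)) < mvr V E + mvr V (compl_graph V E))"

definition hermitian_mat :: "complex mat \<Rightarrow> bool" where
  "hermitian_mat M \<longleftrightarrow> (\<forall>i<dim_row M. \<forall>j<dim_row M. M $$ (i,j) = cnj (M $$ (j,i)))"

definition psd_mat :: "complex mat \<Rightarrow> bool" where
  "psd_mat M \<longleftrightarrow> hermitian_mat M \<and>
     (\<forall>x \<in> carrier_vec (dim_row M). 0 \<le> Re (conjugate x \<bullet> (M *\<^sub>v x)))"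

definition fits_graph :: "nat \<Rightarrow> (nat \<Rightarrow> nat \<Rightarrow> bool) \<Rightarrow> complex mat \<Rightarrow> bool" where
  "fits_graph n E M \<longleftrightarrow> M \<in> carrier_mat n n \<and>
     (\<forall>i<n. \<forall>j<n. i \<noteq> j \<longrightarrow> (M $$ (i,j) \<noteq> 0 \<longleftrightarrow> E i j))"

definition mr :: "nat \<Rightarrow> (nat \<Rightarrow> nat \<Rightarrow> bool) \<Rightarrow> nat" where
  "mr n E = (LEAST r. \<exists>M. fits_graph n E M \<and> hermitian_mat M \<and> vec_space.rank n M = r)"

definition mr_plus :: "nat \<Rightarrow> (nat \<Rightarrow> nat \<Rightarrow> bool) \<Rightarrow> nat" where
  "mr_plus n E = (LEAST r. \<exists>M. fits_graph n E M \<and> psd_mat M \<and> vec_space.rank n M = r)"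

end

theory Submission
  imports Defs
begin

text \<open>If G is not complement critical, some proper nonempty induced subgraph H has
  mvr H + mvr (complement H) \<ge> mvr G + mvr (complement G), and H is again a simple graph
  with fewer vertices; so induction on the number of vertices reduces the bound to complement
  critical graphs. For the matrix ranks, the Gram matrix of an orthogonal representation in
  dimension d is positive semidefinite, has rank at most d and has exactly the off-diagonal
  zero pattern of the graph; hence mr \<le> mr_+ \<le> mvr.\<close>

lemma simple_graph_compl_graph: "simple_graph V E \<Longrightarrow> simple_graph V (compl_graph V E)"
  unfolding simple_graph_def compl_graph_def by auto

lemma simple_graph_induced:
  "simple_graph V E \<Longrightarrow> S \<subseteq> V \<Longrightarrow> S \<noteq> {} \<Longrightarrow> simple_graph S (induced S E)"
  unfolding simple_graph_def induced_def by (auto intro: finite_subset)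

lemma mvr_compl_sum_le_if_complement_critical_le:
  assumes mono: "mono g"
    and crit: "\<And>V E. simple_graph V E \<Longrightarrow> complement_critical V E \<Longrightarrow>
                 mvr V E + mvr V (compl_graph V E) \<le> g (card V)"
    and G: "simple_graph V E"
  shows "mvr V E + mvr V (compl_graph V E) \<le> g (card V)"
  using G
proof (induction "card V" arbitrary: V E rule: less_induct)
  case less
  show ?case
  proof (cases "complement_critical V E")
    case True
    then show ?thesis using crit less.prems by blast
  next
    case False
    then obtain S where S: "S \<subset> V" "S \<noteq> {}"
      and ge: "mvr V E + mvr V (compl_graph V E)
                 \<le> mvr S (induced S E) + mvr S (compl_graph S (induced S E))"
      unfolding complement_critical_def by (auto simp: not_less)
    have "finite V" using less.prems simple_graph_def by blast
    then have card_S: "card S < card V" using S by (simp add: psubset_card_mono)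
    have "simple_graph S (induced S E)" using simple_graph_induced[OF less.prems] S by auto
    with less.hyps[OF card_S] have "mvr S (induced S E) + mvr S (compl_graph S (induced S E))
                                      \<le> g (card S)" .
    also have "\<dots> \<le> g (card V)" using mono card_S by (simp add: monoD)
    finally show ?thesis using ge by linarith
  qed
qed


text \<open>For vertices below N: the standard basis vector of v in the first N coordinates, plus
  a coordinate N + a * N + b for every edge ab with a < b, which is 1 exactly at a and b.\<close>
definition incidence_rep :: "nat \<Rightarrow> (nat \<Rightarrow> nat \<Rightarrow> bool) \<Rightarrow> nat \<Rightarrow> nat \<Rightarrow> real" where
  "incidence_rep N E v i =
     (if i < N then (if i = v then 1 else 0)
      else let a = (i - N) div N; b = (i - N) mod N in
        if E a b \<and> a < b \<and> (v = a \<or> v = b) then 1 else 0)"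

lemma incidence_rep_inner:
  assumes sym: "\<And>a b. E a b \<Longrightarrow> E b a"
    and u: "u < N" and v: "v < N" and uv: "u \<noteq> v"
  shows "(\<Sum>i<N + N * N. incidence_rep N E u i * incidence_rep N E v i) = (if E u v then 1 else 0)"
proof -
  define p where "p = N + min u v * N + max u v"
  have p_less: "p < N + N * N"
  proof -
    have "min u v * N + max u v < Suc (min u v) * N" using v u by simp
    also have "\<dots> \<le> N * N" using u v by (intro mult_le_mono1) simp
    finally show ?thesis unfolding p_def by simp
  qed
  have summand: "incidence_rep N E u i * incidence_rep N E v i = (if i = p \<and> E u v then 1 else 0)" for i
  proof (cases "i < N")
    case True
    then show ?thesis using uv by (auto simp: incidence_rep_def p_def)
  next
    case False
    define j where "j = i - N"
    have "i = p \<longleftrightarrow> j div N = min u v \<and> j mod N = max u v"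
    proof
      assume "i = p"
      then have "j = min u v * N + max u v" using False unfolding j_def p_def by simp
      then show "j div N = min u v \<and> j mod N = max u v" using u v by simp
    next
      assume "j div N = min u v \<and> j mod N = max u v"
      then have "j = min u v * N + max u v" using div_mult_mod_eq[of j N] by simp
      then show "i = p" using False unfolding j_def p_def by linarith
    qed
    then show ?thesis
      using False uv sym unfolding incidence_rep_def j_def Let_def by (auto simp: min_def max_def)
  qed
  have "(\<Sum>i<N + N * N. incidence_rep N E u i * incidence_rep N E v i)
          = (\<Sum>i<N + N * N. if i = p then (if E u v then 1 else 0) else 0)"
    by (rule sum.cong) (auto simp: summand)
  also have "\<dots> = (if E u v then 1 else 0)" using p_less by (simp add: sum.delta)
  finally show ?thesis .
qed

lemma ortho_rep_exists:
  assumes "simple_graph V E"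
  shows "\<exists>d \<phi>. ortho_rep V E d \<phi>"
proof -
  have fin: "finite V" and sym: "\<And>a b. E a b \<Longrightarrow> E b a"
    using assms unfolding simple_graph_def by auto
  define N where "N = Suc (Max V)"
  have below: "v < N" if "v \<in> V" for v
    using fin that unfolding N_def by (simp add: le_imp_less_Suc)
  have "ortho_rep V E (N + N * N) (incidence_rep N E)"
    unfolding ortho_rep_def
  proof (intro conjI ballI impI)
    fix v assume "v \<in> V"
    then show "\<exists>i<N + N * N. incidence_rep N E v i \<noteq> 0"
      using below by (intro exI[of _ v]) (auto simp: incidence_rep_def trans_less_add1)
  next
    fix u v assume "u \<in> V" "v \<in> V" "u \<noteq> v"
    then show "((\<Sum>i<N + N * N. incidence_rep N E u i * incidence_rep N E v i) = 0) = (\<not> E u v)"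
      using incidence_rep_inner[OF sym below below] by simp
  qed
  then show ?thesis by blast
qed

lemma ortho_rep_mvr:
  assumes "simple_graph V E"
  obtains \<phi> where "ortho_rep V E (mvr V E) \<phi>"
  using ortho_rep_exists[OF assms] LeastI_ex[of "\<lambda>d. \<exists>\<phi>. ortho_rep V E d \<phi>"] that
  unfolding mvr_def by blast


definition gram_mat :: "nat \<Rightarrow> (nat \<Rightarrow> nat \<Rightarrow> real) \<Rightarrow> nat \<Rightarrow> complex mat" where
  "gram_mat n \<phi> k = mat n n (\<lambda>(u, v). \<Sum>i<k. complex_of_real (\<phi> u i) * complex_of_real (\<phi> v i))"

lemma gram_mat_carrier: "gram_mat n \<phi> k \<in> carrier_mat n n"
  unfolding gram_mat_def by simp

lemma gram_mat_rank_le: "vec_space.rank n (gram_mat n \<phi> k) \<le> k"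
proof (induction k)
  case 0
  have "gram_mat n \<phi> 0 = 0\<^sub>m n n" unfolding gram_mat_def by (rule eq_matI) auto
  then show ?case by (simp add: vec_space.rank_0I)
next
  case (Suc k)
  define R where "R = mat n n (\<lambda>(u, v). complex_of_real (\<phi> u k) * complex_of_real (\<phi> v k))"
  have R: "R \<in> carrier_mat n n" unfolding R_def by simp
  have "gram_mat n \<phi> (Suc k) = gram_mat n \<phi> k + R"
    unfolding gram_mat_def R_def by (rule eq_matI) auto
  moreover have "vec_space.rank n (gram_mat n \<phi> k + R)
                   \<le> vec_space.rank n (gram_mat n \<phi> k) + vec_space.rank n R"
    by (rule vec_space.rank_subadditive[OF gram_mat_carrier R])
  moreover have "vec_space.rank n R \<le> 1"
    by (rule vec_space.rank_le_1_product_entries[OF R,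
          of "\<lambda>u. complex_of_real (\<phi> u k)" "\<lambda>v. complex_of_real (\<phi> v k)"])
       (auto simp: R_def)
  ultimately show ?case using Suc by simp
qed

lemma gram_mat_hermitian: "hermitian_mat (gram_mat n \<phi> k)"
  unfolding hermitian_mat_def gram_mat_def by (auto simp: mult.commute)

lemma gram_mat_psd: "psd_mat (gram_mat n \<phi> k)"
  unfolding psd_mat_def
proof (intro conjI gram_mat_hermitian ballI)
  fix x :: "complex vec"
  assume "x \<in> carrier_vec (dim_row (gram_mat n \<phi> k))"
  then have dim_x: "dim_vec x = n" by (simp add: gram_mat_def)
  define a where "a = (\<lambda>u i. complex_of_real (\<phi> u i))"
  define s where "s = (\<lambda>i. \<Sum>v<n. a v i * x $ v)"
  have "conjugate x \<bullet> (gram_mat n \<phi> k *\<^sub>v x)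
          = (\<Sum>u<n. cnj (x $ u) * (\<Sum>v<n. (\<Sum>i<k. a u i * a v i) * x $ v))"
    using dim_x unfolding scalar_prod_def
    by (auto simp: gram_mat_def a_def mult_mat_vec_def scalar_prod_def atLeast0LessThan
             intro!: sum.cong)
  also have "\<dots> = (\<Sum>u<n. \<Sum>v<n. \<Sum>i<k. cnj (x $ u) * a u i * (a v i * x $ v))"
    by (simp add: sum_distrib_left sum_distrib_right mult.assoc mult.left_commute)
  also have "\<dots> = (\<Sum>i<k. \<Sum>u<n. \<Sum>v<n. cnj (x $ u) * a u i * (a v i * x $ v))"
    by (simp add: sum.swap[of _ "{..<k}"])
  also have "\<dots> = (\<Sum>i<k. cnj (s i) * s i)"
    unfolding s_def by (simp add: a_def sum_distrib_left sum_distrib_right mult.commute mult.left_commute)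
  also have "\<dots> = (\<Sum>i<k. complex_of_real ((cmod (s i))\<^sup>2))"
    by (rule sum.cong[OF refl]) (subst complex_norm_square, rule mult.commute)
  finally show "0 \<le> Re (conjugate x \<bullet> (gram_mat n \<phi> k *\<^sub>v x))"
    by (simp only: Re_sum Re_complex_of_real) (simp add: sum_nonneg)
qed

lemma fits_graph_gram_mat:
  assumes "ortho_rep {0..<n} E d \<phi>"
  shows "fits_graph n E (gram_mat n \<phi> d)"
  unfolding fits_graph_def
proof (intro conjI allI impI gram_mat_carrier)
  fix i j assume ij: "i < n" "j < n" "i \<noteq> j"
  have "gram_mat n \<phi> d $$ (i, j) = complex_of_real (\<Sum>k<d. \<phi> i k * \<phi> j k)"
    using ij unfolding gram_mat_def by simp
  moreover have "(\<Sum>k<d. \<phi> i k * \<phi> j k) = 0 \<longleftrightarrow> \<not> E i j"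
    using assms ij unfolding ortho_rep_def by auto
  ultimately show "gram_mat n \<phi> d $$ (i, j) \<noteq> 0 \<longleftrightarrow> E i j" by (metis of_real_eq_0_iff)
qed


lemma mr_plus_le_mvr:
  assumes "simple_graph {0..<n} E"
  shows "mr_plus n E \<le> mvr {0..<n} E"
proof -
  obtain \<phi> where "ortho_rep {0..<n} E (mvr {0..<n} E) \<phi>" using ortho_rep_mvr[OF assms] .
  then have "fits_graph n E (gram_mat n \<phi> (mvr {0..<n} E))"
    by (rule fits_graph_gram_mat)
  then have "mr_plus n E \<le> vec_space.rank n (gram_mat n \<phi> (mvr {0..<n} E))"
    unfolding mr_plus_def by (intro Least_le) (blast intro: gram_mat_psd)
  also have "\<dots> \<le> mvr {0..<n} E" by (rule gram_mat_rank_le)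
  finally show ?thesis .
qed

lemma mr_le_mr_plus:
  assumes "simple_graph {0..<n} E"
  shows "mr n E \<le> mr_plus n E"
proof -
  obtain \<phi> where "ortho_rep {0..<n} E (mvr {0..<n} E) \<phi>" using ortho_rep_mvr[OF assms] .
  then have "\<exists>M. fits_graph n E M \<and> psd_mat M"
    by (blast intro: fits_graph_gram_mat gram_mat_psd)
  then obtain M where "fits_graph n E M" "psd_mat M" "vec_space.rank n M = mr_plus n E"
    using LeastI_ex[of "\<lambda>r. \<exists>M. fits_graph n E M \<and> psd_mat M \<and> vec_space.rank n M = r"]
    unfolding mr_plus_def by blast
  then show ?thesis
    unfolding mr_def by (intro Least_le) (auto simp: psd_mat_def)
qed

theorem proposition3p4:
  assumes crit: "\<And>V E. simple_graph V E \<Longrightarrow> complement_critical V E \<Longrightarrow>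
                    mvr V E + mvr V (compl_graph V E) \<le> card V + 2"
  shows "(\<forall>V E. simple_graph V E \<longrightarrow> mvr V E + mvr V (compl_graph V E) \<le> card V + 2) \<and>
         (\<forall>n E. simple_graph {0..<n} E \<longrightarrow> mr_plus n E + mr_plus n (compl_graph {0..<n} E) \<le> n + 2) \<and>
         (\<forall>n E. simple_graph {0..<n} E \<longrightarrow> mr n E + mr n (compl_graph {0..<n} E) \<le> n + 2)"
proof -
  have mvr_bound: "mvr V E + mvr V (compl_graph V E) \<le> card V + 2" if "simple_graph V E" for V E
    using mvr_compl_sum_le_if_complement_critical_le[of "\<lambda>m. m + 2"] crit that
    by (simp add: mono_def)
  have "mr n E + mr n (compl_graph {0..<n} E) \<le> mr_plus n E + mr_plus n (compl_graph {0..<n} E)"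
    and "mr_plus n E + mr_plus n (compl_graph {0..<n} E) \<le> n + 2"
    if G: "simple_graph {0..<n} E" for n E
  proof -
    have G': "simple_graph {0..<n} (compl_graph {0..<n} E)" by (rule simple_graph_compl_graph[OF G])
    show "mr n E + mr n (compl_graph {0..<n} E) \<le> mr_plus n E + mr_plus n (compl_graph {0..<n} E)"
      using mr_le_mr_plus[OF G] mr_le_mr_plus[OF G'] by linarith
    show "mr_plus n E + mr_plus n (compl_graph {0..<n} E) \<le> n + 2"
      using mr_plus_le_mvr[OF G] mr_plus_le_mvr[OF G'] mvr_bound[OF G] by simp
  qed
  with mvr_bound show ?thesis by (meson le_trans)
qed

end
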